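(* Let $n\geq 3$ and let $S$ be a nonempty subset of $[1,n-2]$. Writing $S+1=\{s+1:s\in S\}$, one has $$a_{\{1\}\cup(S+1)}(n+1)=a'_S(n).$$
   Context: $\Pi_n$ is the lattice of set partitions of $[n]$ ordered by refinement; a partition with $k$ blocks has rank $n-k$, and the nontrivial ranks are $1,\dots,n-2$. For $S\subseteq[1,n-2]$, the rank-selected subposet $\Pi_n(S)$ consists of the partitions whose rank lies in $S$; its maximal chains have exactly one element at each rank in $S$. $a_S(n)$ denotes the number of $S_n$-orbits on the set of maximal chains of $\Pi_n(S)$ (equivalently, the multiplicity of the trivial representation in the permutation representation of $S_n$ on these chains), and $a'_S(n)$ denotes the number of orbits of the subgroup $S_{n-1}\times S_1$ (permutations fixing $n$) on these maximal chains. *)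

theory Defs
  imports "HOL-Library.Disjoint_Sets" "HOL-Combinatorics.Permutations"
begin

definition setparts :: "nat \<Rightarrow> nat set set set" where
  "setparts n = {P. partition_on {1..n} P}"

definition refines :: "nat set set \<Rightarrow> nat set set \<Rightarrow> bool" where
  "refines P Q \<longleftrightarrow> (\<forall>B\<in>P. \<exists>B'\<in>Q. B \<subseteq> B')"

definition prank :: "nat \<Rightarrow> nat set set \<Rightarrow> nat" where
  "prank n P = n - card P"

definition rank_sel :: "nat \<Rightarrow> nat set \<Rightarrow> nat set set set" where
  "rank_sel n S = {P \<in> setparts n. prank n P \<in> S}"

definition is_chain :: "nat \<Rightarrow> nat set \<Rightarrow> nat set set set \<Rightarrow> bool" where
  "is_chain n S C \<longleftrightarrow> C \<subseteq> rank_sel n S \<and> (\<forall>P\<in>C. \<forall>Q\<in>C. refines P Q \<or> refines Q P)"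

definition max_chains :: "nat \<Rightarrow> nat set \<Rightarrow> nat set set set set" where
  "max_chains n S = {C. is_chain n S C \<and> (\<forall>D. is_chain n S D \<and> C \<subseteq> D \<longrightarrow> D = C)}"

definition act_chain :: "(nat \<Rightarrow> nat) \<Rightarrow> nat set set set \<Rightarrow> nat set set set" where
  "act_chain \<sigma> C = (\<lambda>P. (\<lambda>B. \<sigma> ` B) ` P) ` C"

definition chain_orbits :: "(nat \<Rightarrow> nat) set \<Rightarrow> nat \<Rightarrow> nat set \<Rightarrow> nat" where
  "chain_orbits G n S = card ((\<lambda>C. {act_chain \<sigma> C | \<sigma>. \<sigma> \<in> G}) ` max_chains n S)"

definition a_S :: "nat set \<Rightarrow> nat \<Rightarrow> nat" where
  "a_S S n = chain_orbits {\<sigma>. \<sigma> permutes {1..n}} n S"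

text \<open>a'_S(n): orbits of S_{n-1} x S_1 (permutations of [n] fixing n).\<close>
definition a'_S :: "nat set \<Rightarrow> nat \<Rightarrow> nat" where
  "a'_S S n = chain_orbits {\<sigma>. \<sigma> permutes {1..n-1}} n S"

end

theory Submission
  imports Defs
begin

text \<open>Every maximal chain of \<open>\<Pi>\<^sub>n\<^sub>+\<^sub>1({1} \<union> (S + 1))\<close> contains an atom (its rank-1 element),
  and a permutation of \<open>[n + 1]\<close> moves that atom to \<open>{{n, n + 1}} \<union> singletons\<close>. The chains through
  this atom correspond bijectively to the maximal chains of \<open>\<Pi>\<^sub>n(S)\<close>: remove the atom and delete
  \<open>n + 1\<close> from every partition. Two such chains are conjugate under \<open>S\<^sub>n\<^sub>+\<^sub>1\<close> only by an element
  stabilising the atom, i.e. fixing or swapping \<open>n\<close> and \<open>n + 1\<close>; the swap acts trivially on the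
  chain, so they are conjugate by a permutation fixing \<open>n\<close> and \<open>n + 1\<close>, that is, by \<open>S\<^sub>n\<^sub>-\<^sub>1\<close>.\<close>

section \<open>Partitions and refinement\<close>

lemma partition_on_block_unique:
  "partition_on A P \<Longrightarrow> B \<in> P \<Longrightarrow> B' \<in> P \<Longrightarrow> x \<in> B \<Longrightarrow> x \<in> B' \<Longrightarrow> B = B'"
  unfolding partition_on_def disjoint_def by blast

lemma partition_on_block_subset: "partition_on A P \<Longrightarrow> B \<in> P \<Longrightarrow> B \<subseteq> A"
  unfolding partition_on_def by blast

lemma partition_on_covers: "partition_on A P \<Longrightarrow> x \<in> A \<Longrightarrow> \<exists>B\<in>P. x \<in> B"
  unfolding partition_on_def by blast

lemma partition_on_block_nonempty: "partition_on A P \<Longrightarrow> B \<in> P \<Longrightarrow> \<exists>x. x \<in> B"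
  using partition_onD3 by (metis ex_in_conv)

lemma refines_self: "refines P P"
  unfolding refines_def by blast

lemma refines_transitive: "refines P Q \<Longrightarrow> refines Q R \<Longrightarrow> refines P R"
  unfolding refines_def by (meson order_trans)

lemma refines_imp_image:
  assumes P: "partition_on A P" and Q: "partition_on A Q" and r: "refines P Q"
  obtains g where "Q = g ` P" and "\<And>B. B \<in> P \<Longrightarrow> g B \<in> Q \<and> B \<subseteq> g B"
proof -
  define g where "g B = (SOME B'. B' \<in> Q \<and> B \<subseteq> B')" for B
  have g: "g B \<in> Q \<and> B \<subseteq> g B" if "B \<in> P" for B
    unfolding g_def by (rule someI_ex) (use r that in \<open>auto simp: refines_def\<close>)
  have "Q \<subseteq> g ` P"
  proof
    fix B' assume B': "B' \<in> Q"
    obtain x where x: "x \<in> B'" using partition_on_block_nonempty[OF Q B'] by blast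
    then obtain B where B: "B \<in> P" "x \<in> B"
      using partition_on_covers[OF P] partition_on_block_subset[OF Q B'] by blast
    then have "g B = B'" using partition_on_block_unique[OF Q _ B' _ x] g by blast
    then show "B' \<in> g ` P" using B by blast
  qed
  then have "Q = g ` P" using g by blast
  then show thesis by (rule that) (use g in blast)
qed

lemma refines_card_le:
  assumes "finite A" "partition_on A P" "partition_on A Q" "refines P Q"
  shows "card Q \<le> card P"
  by (metis assms card_image_le finite_elements refines_imp_image)

lemma refines_card_eq_imp_eq:
  assumes fin: "finite A" and P: "partition_on A P" and Q: "partition_on A Q"
    and r: "refines P Q" and eq: "card Q = card P"
  shows "Q = P"
proof -
  obtain g where QP: "Q = g ` P" and g: "\<And>B. B \<in> P \<Longrightarrow> g B \<in> Q \<and> B \<subseteq> g B"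
    using refines_imp_image[OF P Q r] by blast
  have inj: "inj_on g P"
    using eq_card_imp_inj_on[OF finite_elements[OF fin P]] eq QP by simp
  have "g B \<subseteq> B" if B: "B \<in> P" for B
  proof
    fix y assume y: "y \<in> g B"
    obtain B2 where B2: "B2 \<in> P" "y \<in> B2"
      using partition_on_covers[OF P] partition_on_block_subset[OF Q] g[OF B] y by blast
    have "g B2 = g B" using partition_on_block_unique[OF Q _ _ _ y] g[OF B2(1)] g[OF B] B2(2) by blast
    then show "y \<in> B" using inj B2 B by (metis inj_onD)
  qed
  then have "g ` P = P" using g by (force intro: image_cong[where g = id, simplified])
  then show ?thesis using QP by simp
qed

lemma partition_on_nonsingleton_block:
  assumes fin: "finite A" and P: "partition_on A P" and c: "card P < card A"
  obtains B a b where "B \<in> P" "a \<in> B" "b \<in> B" "a \<noteq> b"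
proof -
  have "\<exists>B\<in>P. 1 < card B"
  proof (rule ccontr)
    assume "\<not> ?thesis"
    then have "card A \<le> (\<Sum>B\<in>P. 1)"
      using card_Union_le_sum_card[of P] sum_mono[of P card "\<lambda>_. 1"] partition_onD1[OF P]
      by (simp add: not_less)
    then show False using c by simp
  qed
  then obtain B where B: "B \<in> P" "1 < card B" by blast
  then have "\<not> (\<forall>a\<in>B. \<forall>b\<in>B. a = b)"
    using card_le_Suc0_iff_eq[of B] card.infinite[of B] by force
  then show thesis using that B(1) by blast
qed

section \<open>Atoms and the permutation action\<close>

definition atom :: "'a set \<Rightarrow> 'a \<Rightarrow> 'a \<Rightarrow> 'a set set" where
  "atom A a b = insert {a, b} ((\<lambda>i. {i}) ` (A - {a, b}))"

lemma partition_on_atom: "a \<in> A \<Longrightarrow> b \<in> A \<Longrightarrow> partition_on A (atom A a b)"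
  unfolding partition_on_def disjoint_def atom_def by auto

lemma card_atom:
  assumes "finite A" "a \<in> A" "b \<in> A" "a \<noteq> b"
  shows "card (atom A a b) = card A - 1"
proof -
  have "{a, b} \<notin> (\<lambda>i. {i}) ` (A - {a, b})"
    using assms(4) by (auto simp: doubleton_eq_iff)
  moreover have "card ((\<lambda>i. {i}) ` (A - {a, b})) = card A - 2"
    using assms by (subst card_image) (auto simp: inj_on_def)
  ultimately show ?thesis
    using assms card_mono[of A "{a, b}"] unfolding atom_def by simp
qed

lemma atom_refines:
  assumes Q: "partition_on A Q" and "B \<in> Q" "a \<in> B" "b \<in> B"
  shows "refines (atom A a b) Q"
  unfolding refines_def atom_def
proof
  fix B' assume "B' \<in> insert {a, b} ((\<lambda>i. {i}) ` (A - {a, b}))"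
  then show "\<exists>B''\<in>Q. B' \<subseteq> B''"
    using assms partition_on_covers[OF Q] by auto
qed

lemma atom_eq_imp_doubleton_eq:
  assumes "atom A a b = atom A c d" "a \<noteq> b"
  shows "{a, b} = {c, d}"
proof -
  have "{a, b} \<in> atom A c d" using assms(1) unfolding atom_def by auto
  moreover have "{a, b} \<noteq> {i}" for i using assms(2) by auto
  ultimately show ?thesis unfolding atom_def by blast
qed

definition act_part :: "('a \<Rightarrow> 'a) \<Rightarrow> 'a set set \<Rightarrow> 'a set set" where
  "act_part \<sigma> P = (\<lambda>B. \<sigma> ` B) ` P"

lemma act_chain_eq: "act_chain \<sigma> C = act_part \<sigma> ` C"
  unfolding act_chain_def act_part_def ..

lemma act_part_compose: "act_part (\<sigma> \<circ> \<tau>) P = act_part \<sigma> (act_part \<tau> P)"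
  unfolding act_part_def image_image by (simp add: image_comp)

lemma act_part_id: "act_part id P = P"
  unfolding act_part_def by simp

lemma partition_on_act_part:
  assumes s: "\<sigma> permutes A" and P: "partition_on A P"
  shows "partition_on A (act_part \<sigma> P)"
proof -
  have "partition_on (\<sigma> ` A) ((`) \<sigma> ` P - {{}})"
    using partition_on_inj_image[OF P] permutes_inj_on[OF s] by blast
  moreover have "{} \<notin> (`) \<sigma> ` P" using partition_onD3[OF P] by auto
  ultimately show ?thesis unfolding act_part_def permutes_image[OF s] by simp
qed

lemma card_act_part: "\<sigma> permutes A \<Longrightarrow> card (act_part \<sigma> P) = card P"
  unfolding act_part_def
  by (intro card_image) (simp add: inj_on_def inj_image_eq_iff[OF permutes_inj])

lemma act_part_refines:
  assumes "refines P Q"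
  shows "refines (act_part \<sigma> P) (act_part \<sigma> Q)"
  unfolding refines_def act_part_def
proof
  fix C assume "C \<in> (`) \<sigma> ` P"
  then obtain B B' where "C = \<sigma> ` B" "B' \<in> Q" "B \<subseteq> B'"
    using assms unfolding refines_def by blast
  then show "\<exists>C'\<in>(`) \<sigma> ` Q. C \<subseteq> C'" by blast
qed

lemma act_part_atom:
  assumes s: "\<sigma> permutes A"
  shows "act_part \<sigma> (atom A a b) = atom A (\<sigma> a) (\<sigma> b)"
proof -
  have "(\<lambda>i. {\<sigma> i}) ` (A - {a, b}) = (\<lambda>i. {i}) ` (\<sigma> ` (A - {a, b}))"
    by (simp add: image_image)
  also have "\<sigma> ` (A - {a, b}) = A - {\<sigma> a, \<sigma> b}"
    using image_set_diff[OF permutes_inj[OF s]] permutes_image[OF s] by simp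
  finally show ?thesis unfolding act_part_def atom_def image_insert image_image by simp
qed

section \<open>Adjoining and removing the point \<open>n + 1\<close>\<close>

text \<open>\<open>extend_part n P\<close> adds \<open>n + 1\<close> to the block of \<open>n\<close>; it is an isomorphism of \<open>\<Pi>\<^sub>n\<close> onto the
  interval of \<open>\<Pi>\<^sub>n\<^sub>+\<^sub>1\<close> above \<open>last_atom n\<close>, with inverse \<open>restrict_part n\<close>.\<close>
definition extend_part :: "nat \<Rightarrow> nat set set \<Rightarrow> nat set set" where
  "extend_part n P = (\<lambda>B. if n \<in> B then insert (Suc n) B else B) ` P"

definition restrict_part :: "nat \<Rightarrow> nat set set \<Rightarrow> nat set set" where
  "restrict_part n Q = (\<lambda>B. B - {Suc n}) ` Q"

definition last_atom :: "nat \<Rightarrow> nat set set" where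
  "last_atom n = atom {1..Suc n} n (Suc n)"

lemma extend_block_minus:
  assumes "partition_on {1..n} P" "B \<in> P"
  shows "(if n \<in> B then insert (Suc n) B else B) - {Suc n} = B"
  using partition_on_block_subset[OF assms] by auto

lemma restrict_extend_part: "partition_on {1..n} P \<Longrightarrow> restrict_part n (extend_part n P) = P"
  unfolding restrict_part_def extend_part_def image_image
  by (simp add: extend_block_minus cong: image_cong)

lemma card_extend_part:
  assumes P: "partition_on {1..n} P"
  shows "card (extend_part n P) = card P"
  unfolding extend_part_def
  by (intro card_image inj_onI) (metis extend_block_minus[OF P])

lemma partition_on_extend_part:
  assumes n: "n \<ge> 1" and P: "partition_on {1..n} P"
  shows "partition_on {1..Suc n} (extend_part n P)"
proof -
  define f where "f B = (if n \<in> B then insert (Suc n) B else B)" for B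
  have sub: "B \<subseteq> {1..n}" if "B \<in> P" for B using partition_on_block_subset[OF P that] .
  obtain Bn where Bn: "Bn \<in> P" "n \<in> Bn" using partition_on_covers[OF P, of n] n by auto
  have "\<Union>(f ` P) = insert (Suc n) (\<Union>P)" using Bn unfolding f_def by auto
  then have U: "\<Union>(f ` P) = {1..Suc n}"
    using partition_onD1[OF P] atLeastAtMostSuc_conv[of 1 n] by simp
  have D: "f B \<inter> f B' = {}" if BB: "B \<in> P" "B' \<in> P" "f B \<noteq> f B'" for B B'
  proof -
    have "B \<noteq> B'" using BB(3) by blast
    then have dis: "B \<inter> B' = {}" using P BB(1,2) unfolding partition_on_def disjoint_def by auto
    then have "\<not> (n \<in> B \<and> n \<in> B')" by blast
    then show ?thesis using dis sub[OF BB(1)] sub[OF BB(2)] unfolding f_def by auto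
  qed
  have E: "{} \<notin> f ` P" using partition_onD3[OF P] unfolding f_def by auto
  show ?thesis unfolding partition_on_def disjoint_def extend_part_def f_def[symmetric]
    using U D E by blast
qed

lemma extend_part_refines:
  assumes "refines P Q"
  shows "refines (extend_part n P) (extend_part n Q)"
  unfolding refines_def
proof
  fix C assume "C \<in> extend_part n P"
  then obtain B where B: "B \<in> P" "C = (if n \<in> B then insert (Suc n) B else B)"
    unfolding extend_part_def by auto
  then obtain B' where "B' \<in> Q" "B \<subseteq> B'" using assms unfolding refines_def by auto
  then have "(if n \<in> B' then insert (Suc n) B' else B') \<in> extend_part n Q"
    and "C \<subseteq> (if n \<in> B' then insert (Suc n) B' else B')"
    using B(2) unfolding extend_part_def by auto
  then show "\<exists>C'\<in>extend_part n Q. C \<subseteq> C'" by blast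
qed

lemma restrict_part_refines:
  assumes "refines P Q"
  shows "refines (restrict_part n P) (restrict_part n Q)"
  unfolding refines_def
proof
  fix C assume "C \<in> restrict_part n P"
  then obtain B where B: "B \<in> P" "C = B - {Suc n}" unfolding restrict_part_def by blast
  then obtain B' where B': "B' \<in> Q" "B \<subseteq> B'" using assms unfolding refines_def by blast
  have "B' - {Suc n} \<in> restrict_part n Q" using B'(1) unfolding restrict_part_def by (rule imageI)
  moreover have "C \<subseteq> B' - {Suc n}" using B(2) B'(2) by blast
  ultimately show "\<exists>C'\<in>restrict_part n Q. C \<subseteq> C'" by blast
qed

lemma partition_on_last_atom: "n \<ge> 1 \<Longrightarrow> partition_on {1..Suc n} (last_atom n)"
  unfolding last_atom_def by (rule partition_on_atom) auto

lemma card_last_atom: "n \<ge> 1 \<Longrightarrow> card (last_atom n) = n"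
  unfolding last_atom_def by (subst card_atom) auto

lemma last_atom_refines_extend_part:
  assumes n: "n \<ge> 1" and P: "partition_on {1..n} P"
  shows "refines (last_atom n) (extend_part n P)"
proof -
  obtain Bn where Bn: "Bn \<in> P" "n \<in> Bn" using partition_on_covers[OF P, of n] n by auto
  then have "insert (Suc n) Bn \<in> extend_part n P" unfolding extend_part_def by force
  then show ?thesis
    unfolding last_atom_def using atom_refines[OF partition_on_extend_part[OF n P]] Bn by blast
qed

lemma restrict_part_above_last_atom:
  assumes n: "n \<ge> 1" and Q: "partition_on {1..Suc n} Q"
    and B0: "B0 \<in> Q" "n \<in> B0" "Suc n \<in> B0"
  shows "partition_on {1..n} (restrict_part n Q)" and "extend_part n (restrict_part n Q) = Q"
proof -
  define g where "g B = B - {Suc n}" for B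
  have in_B0: "B = B0" if "B \<in> Q" "n \<in> B \<or> Suc n \<in> B" for B
    using partition_on_block_unique[OF Q that(1) B0(1)] B0 that(2) by blast
  have "\<Union>(g ` Q) = \<Union>Q - {Suc n}" unfolding g_def by blast
  then have U: "\<Union>(g ` Q) = {1..n}"
    using partition_onD1[OF Q] atLeastAtMostSuc_conv[of 1 n] by simp
  have D: "g B \<inter> g B' = {}" if "B \<in> Q" "B' \<in> Q" "g B \<noteq> g B'" for B B'
    using Q that unfolding partition_on_def disjoint_def g_def by blast
  have E: "{} \<notin> g ` Q"
  proof
    assume "{} \<in> g ` Q"
    then obtain B where B: "B \<in> Q" "B \<subseteq> {Suc n}" unfolding g_def by auto
    then have "B = B0" using in_B0 partition_on_block_nonempty[OF Q B(1)] by blast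
    then show False using B(2) B0(2) by auto
  qed
  show "partition_on {1..n} (restrict_part n Q)"
    unfolding partition_on_def disjoint_def restrict_part_def g_def[symmetric] using U D E by blast
  have "(if n \<in> B - {Suc n} then insert (Suc n) (B - {Suc n}) else B - {Suc n}) = B" if "B \<in> Q" for B
    using in_B0[OF that] B0 by auto
  then show "extend_part n (restrict_part n Q) = Q"
    unfolding extend_part_def restrict_part_def image_image by (simp cong: image_cong)
qed

lemma act_part_extend_part:
  assumes inj: "inj \<tau>" and fix_n: "\<tau> n = n" and fix_Suc_n: "\<tau> (Suc n) = Suc n"
  shows "act_part \<tau> (extend_part n P) = extend_part n (act_part \<tau> P)"
proof -
  have "n \<in> \<tau> ` B \<longleftrightarrow> n \<in> B" for B using inj fix_n by (metis inj_image_mem_iff)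
  then have "\<tau> ` (if n \<in> B then insert (Suc n) B else B)
      = (if n \<in> \<tau> ` B then insert (Suc n) (\<tau> ` B) else \<tau> ` B)" for B
    using fix_Suc_n by simp
  then show ?thesis unfolding act_part_def extend_part_def image_image by simp
qed

lemma act_part_transpose_extend_part:
  assumes P: "partition_on {1..n} P"
  shows "act_part (transpose n (Suc n)) (extend_part n P) = extend_part n P"
proof -
  have "transpose n (Suc n) ` (if n \<in> B then insert (Suc n) B else B)
      = (if n \<in> B then insert (Suc n) B else B)" if "B \<in> P" for B
    using partition_on_block_subset[OF P that] by (auto simp: transpose_def image_iff)
  then show ?thesis unfolding act_part_def extend_part_def image_image by (simp cong: image_cong)
qed

section \<open>Maximal chains of \<open>\<Pi>\<^sub>n(S)\<close> and of \<open>\<Pi>\<^sub>n\<^sub>+\<^sub>1({1} \<union> (S + 1))\<close>\<close>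

abbreviation shift_ranks :: "nat set \<Rightarrow> nat set" where
  "shift_ranks S \<equiv> {1} \<union> (\<lambda>s. s + 1) ` S"

definition extend_chain :: "nat \<Rightarrow> nat set set set \<Rightarrow> nat set set set" where
  "extend_chain n C = insert (last_atom n) (extend_part n ` C)"

definition restrict_chain :: "nat \<Rightarrow> nat set set set \<Rightarrow> nat set set set" where
  "restrict_chain n E = restrict_part n ` (E - {last_atom n})"

lemma rank_selD:
  assumes "P \<in> rank_sel n S" "0 \<notin> S"
  shows "partition_on {1..n} P" "card P < n" "n - card P \<in> S"
proof -
  show "partition_on {1..n} P" "n - card P \<in> S"
    using assms(1) unfolding rank_sel_def setparts_def prank_def by auto
  then show "card P < n" using assms(2) by (metis diff_is_0_eq leI)
qed

lemma extend_part_rank_sel: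
  assumes n: "n \<ge> 1" and S0: "0 \<notin> S" and P: "P \<in> rank_sel n S"
  shows "extend_part n P \<in> rank_sel (Suc n) (shift_ranks S)"
proof -
  note p = rank_selD[OF P S0]
  have "prank (Suc n) (extend_part n P) = (n - card P) + 1"
    unfolding prank_def card_extend_part[OF p(1)] using p(2) by simp
  then show ?thesis
    using partition_on_extend_part[OF n p(1)] p(3) unfolding rank_sel_def setparts_def by auto
qed

lemma last_atom_rank_sel: "n \<ge> 1 \<Longrightarrow> last_atom n \<in> rank_sel (Suc n) (shift_ranks S)"
  using partition_on_last_atom card_last_atom unfolding rank_sel_def setparts_def prank_def by auto

lemma last_atom_notin_extend_part:
  assumes n: "n \<ge> 1" and S0: "0 \<notin> S" and C: "C \<subseteq> rank_sel n S"
  shows "last_atom n \<notin> extend_part n ` C"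
proof
  assume "last_atom n \<in> extend_part n ` C"
  then obtain P where P: "P \<in> C" "last_atom n = extend_part n P" by auto
  have "card (last_atom n) = card P" using P(2) card_extend_part rank_selD[OF _ S0] C P(1) by auto
  then show False using card_last_atom[OF n] rank_selD[OF _ S0] C P(1) by force
qed

lemma is_chain_extend_chain:
  assumes n: "n \<ge> 1" and S0: "0 \<notin> S" and C: "is_chain n S C"
  shows "is_chain (Suc n) (shift_ranks S) (extend_chain n C)"
proof -
  have Cs: "C \<subseteq> rank_sel n S" and Cc: "\<forall>P\<in>C. \<forall>Q\<in>C. refines P Q \<or> refines Q P"
    using C unfolding is_chain_def by auto
  have "extend_chain n C \<subseteq> rank_sel (Suc n) (shift_ranks S)"
    unfolding extend_chain_def using last_atom_rank_sel[OF n] extend_part_rank_sel[OF n S0] Cs by auto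
  moreover have bot: "refines (last_atom n) (extend_part n P)" if "P \<in> C" for P
    using last_atom_refines_extend_part[OF n] rank_selD(1)[OF _ S0] Cs that by blast
  have "refines P Q \<or> refines Q P" if "P \<in> extend_chain n C" "Q \<in> extend_chain n C" for P Q
    using that bot refines_self Cc extend_part_refines unfolding extend_chain_def by auto metis
  ultimately show ?thesis unfolding is_chain_def by blast
qed

text \<open>A member below \<open>last_atom n\<close> has rank 0 or equals it; rank 0 is not selected.\<close>
lemma last_atom_below_chain_member:
  assumes n: "n \<ge> 1" and S0: "0 \<notin> S" and E: "is_chain (Suc n) (shift_ranks S) E"
    and a: "last_atom n \<in> E" and Q: "Q \<in> E" "Q \<noteq> last_atom n"
  shows "refines (last_atom n) Q" and "card Q < n"
proof -
  have Qp: "partition_on {1..Suc n} Q" and Qr: "Suc n - card Q \<in> shift_ranks S"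
    using E Q(1) unfolding is_chain_def rank_sel_def setparts_def prank_def by auto
  note a_part = partition_on_last_atom[OF n] and a_card = card_last_atom[OF n]
  show ref: "refines (last_atom n) Q"
  proof (rule ccontr)
    assume "\<not> refines (last_atom n) Q"
    then have "refines Q (last_atom n)" using E Q(1) a unfolding is_chain_def by blast
    then have "n \<le> card Q" "card Q \<noteq> n"
      using refines_card_le[OF _ Qp a_part] refines_card_eq_imp_eq[OF _ Qp a_part] a_card Q(2)
      by auto
    then have "Suc n - card Q = 0" by simp
    then show False using Qr S0 by auto
  qed
  have "card Q \<le> n" "card Q \<noteq> n"
    using refines_card_le[OF _ a_part Qp ref] refines_card_eq_imp_eq[OF _ a_part Qp ref] a_card Q(2)
    by auto
  then show "card Q < n" by simp
qed

lemma restrict_part_rank_sel: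
  assumes n: "n \<ge> 1" and S0: "0 \<notin> S" and E: "is_chain (Suc n) (shift_ranks S) E"
    and a: "last_atom n \<in> E" and Q: "Q \<in> E" "Q \<noteq> last_atom n"
  shows "restrict_part n Q \<in> rank_sel n S" and "extend_part n (restrict_part n Q) = Q"
proof -
  have Qp: "partition_on {1..Suc n} Q" and Qr: "Suc n - card Q \<in> shift_ranks S"
    using E Q(1) unfolding is_chain_def rank_sel_def setparts_def prank_def by auto
  note below = last_atom_below_chain_member[OF n S0 E a Q]
  obtain s where s: "s \<in> S" "Suc n - card Q = s + 1" using Qr below(2) by auto
  have "{n, Suc n} \<in> last_atom n" unfolding last_atom_def atom_def by simp
  then obtain B0 where B0: "B0 \<in> Q" "n \<in> B0" "Suc n \<in> B0"
    using below(1) unfolding refines_def by blast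
  note restr = restrict_part_above_last_atom[OF n Qp B0]
  show "extend_part n (restrict_part n Q) = Q" by (rule restr(2))
  have "card (restrict_part n Q) = card Q" using card_extend_part[OF restr(1)] restr(2) by simp
  then have "prank n (restrict_part n Q) = s" unfolding prank_def using s(2) below(2) by simp
  then show "restrict_part n Q \<in> rank_sel n S"
    using restr(1) s(1) unfolding rank_sel_def setparts_def by auto
qed

lemma is_chain_restrict_chain:
  assumes n: "n \<ge> 1" and S0: "0 \<notin> S" and E: "is_chain (Suc n) (shift_ranks S) E"
    and a: "last_atom n \<in> E"
  shows "is_chain n S (restrict_chain n E)" and "extend_chain n (restrict_chain n E) = E"
proof -
  note restr = restrict_part_rank_sel[OF n S0 E a]
  have "restrict_chain n E \<subseteq> rank_sel n S" unfolding restrict_chain_def using restr(1) by blast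
  moreover have "refines P Q \<or> refines Q P" if "P \<in> restrict_chain n E" "Q \<in> restrict_chain n E" for P Q
    using that E restrict_part_refines unfolding restrict_chain_def is_chain_def by blast
  ultimately show "is_chain n S (restrict_chain n E)" unfolding is_chain_def by blast
  have "extend_part n ` restrict_chain n E = (\<lambda>Q. Q) ` (E - {last_atom n})"
    unfolding restrict_chain_def image_image by (rule image_cong) (simp_all add: restr(2))
  then show "extend_chain n (restrict_chain n E) = E" unfolding extend_chain_def using a by auto
qed

lemma restrict_extend_chain:
  assumes n: "n \<ge> 1" and S0: "0 \<notin> S" and C: "C \<subseteq> rank_sel n S"
  shows "restrict_chain n (extend_chain n C) = C"
proof -
  have "extend_chain n C - {last_atom n} = extend_part n ` C"
    unfolding extend_chain_def using last_atom_notin_extend_part[OF n S0 C] by auto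
  moreover have "restrict_part n ` extend_part n ` C = (\<lambda>P. P) ` C"
    unfolding image_image
    by (rule image_cong) (use restrict_extend_part rank_selD(1)[OF _ S0] C in auto)
  ultimately show ?thesis unfolding restrict_chain_def by simp
qed

lemma max_chains_extend_chain:
  assumes n: "n \<ge> 1" and S0: "0 \<notin> S" and C: "C \<in> max_chains n S"
  shows "extend_chain n C \<in> max_chains (Suc n) (shift_ranks S)"
proof -
  have Cc: "is_chain n S C" and Cm: "\<And>D. is_chain n S D \<Longrightarrow> C \<subseteq> D \<Longrightarrow> D = C"
    using C unfolding max_chains_def by auto
  have Cs: "C \<subseteq> rank_sel n S" using Cc unfolding is_chain_def by auto
  have "E = extend_chain n C"
    if E: "is_chain (Suc n) (shift_ranks S) E" and sub: "extend_chain n C \<subseteq> E" for E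
  proof -
    have a: "last_atom n \<in> E" using sub unfolding extend_chain_def by auto
    note restr = is_chain_restrict_chain[OF n S0 E a]
    have "restrict_chain n (extend_chain n C) \<subseteq> restrict_chain n E"
      unfolding restrict_chain_def using sub by auto
    then have "restrict_chain n E = C" using Cm restr(1) restrict_extend_chain[OF n S0 Cs] by simp
    then show ?thesis using restr(2) by simp
  qed
  then show ?thesis using is_chain_extend_chain[OF n S0 Cc] unfolding max_chains_def by auto
qed

lemma max_chains_restrict_chain:
  assumes n: "n \<ge> 1" and S0: "0 \<notin> S"
    and E: "E \<in> max_chains (Suc n) (shift_ranks S)" and a: "last_atom n \<in> E"
  shows "restrict_chain n E \<in> max_chains n S" and "extend_chain n (restrict_chain n E) = E"
proof -
  have Ec: "is_chain (Suc n) (shift_ranks S) E"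
    and Em: "\<And>D. is_chain (Suc n) (shift_ranks S) D \<Longrightarrow> E \<subseteq> D \<Longrightarrow> D = E"
    using E unfolding max_chains_def by auto
  note restr = is_chain_restrict_chain[OF n S0 Ec a]
  show "extend_chain n (restrict_chain n E) = E" by (rule restr(2))
  have "D = restrict_chain n E" if D: "is_chain n S D" and sub: "restrict_chain n E \<subseteq> D" for D
  proof -
    have "E \<subseteq> extend_chain n D" using restr(2) sub unfolding extend_chain_def by auto
    then have "extend_chain n D = E" using Em is_chain_extend_chain[OF n S0 D] by auto
    then show ?thesis using restrict_extend_chain[OF n S0] D unfolding is_chain_def by metis
  qed
  then show "restrict_chain n E \<in> max_chains n S" using restr(1) unfolding max_chains_def by auto
qed

lemma act_chain_compose: "act_chain (\<sigma> \<circ> \<tau>) C = act_chain \<sigma> (act_chain \<tau> C)"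
  unfolding act_chain_eq act_part_compose image_image ..

lemma act_chain_id: "act_chain id C = C"
  unfolding act_chain_eq act_part_id by simp

lemma act_chain_inv: "\<sigma> permutes A \<Longrightarrow> act_chain (inv \<sigma>) (act_chain \<sigma> C) = C"
  by (metis act_chain_compose act_chain_id permutes_inv_o(2))

lemma is_chain_act_chain:
  assumes s: "\<sigma> permutes {1..m}" and C: "is_chain m S C"
  shows "is_chain m S (act_chain \<sigma> C)"
proof -
  have "act_part \<sigma> P \<in> rank_sel m S" if "P \<in> rank_sel m S" for P
    using that partition_on_act_part[OF s] card_act_part[OF s]
    unfolding rank_sel_def setparts_def prank_def by auto
  then have "act_chain \<sigma> C \<subseteq> rank_sel m S" using C unfolding is_chain_def act_chain_eq by auto
  moreover have "refines P' Q' \<or> refines Q' P'"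
    if "P' \<in> act_chain \<sigma> C" "Q' \<in> act_chain \<sigma> C" for P' Q'
    using that C act_part_refines unfolding act_chain_eq is_chain_def by (auto; metis)
  ultimately show ?thesis unfolding is_chain_def by blast
qed

lemma max_chains_act_chain:
  assumes s: "\<sigma> permutes {1..m}" and C: "C \<in> max_chains m S"
  shows "act_chain \<sigma> C \<in> max_chains m S"
proof -
  have Cc: "is_chain m S C" and Cm: "\<And>D. is_chain m S D \<Longrightarrow> C \<subseteq> D \<Longrightarrow> D = C"
    using C unfolding max_chains_def by auto
  have si: "inv \<sigma> permutes {1..m}" using permutes_inv[OF s] .
  have "D = act_chain \<sigma> C" if D: "is_chain m S D" and sub: "act_chain \<sigma> C \<subseteq> D" for D
  proof -
    have "C \<subseteq> act_chain (inv \<sigma>) D"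
      using image_mono[OF sub, of "act_part (inv \<sigma>)"] act_chain_inv[OF s] by (simp add: act_chain_eq)
    then have "act_chain (inv \<sigma>) D = C" using Cm is_chain_act_chain[OF si D] by auto
    then show ?thesis using act_chain_inv[OF si] permutes_inv_inv[OF s] by metis
  qed
  then show ?thesis using is_chain_act_chain[OF s Cc] unfolding max_chains_def by auto
qed

lemma act_chain_extend_chain:
  assumes s: "\<sigma> permutes {1..Suc n}" and fix_n: "\<sigma> n = n" and fix_Suc_n: "\<sigma> (Suc n) = Suc n"
  shows "act_chain \<sigma> (extend_chain n C) = extend_chain n (act_chain \<sigma> C)"
proof -
  have "act_part \<sigma> (last_atom n) = last_atom n"
    unfolding last_atom_def act_part_atom[OF s] fix_n fix_Suc_n ..
  then show ?thesis
    unfolding act_chain_eq extend_chain_def image_insert image_image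
    by (simp add: act_part_extend_part[OF permutes_inj[OF s] fix_n fix_Suc_n])
qed

text \<open>Choose the finest member \<open>Q\<^sub>0\<close> of the chain; it has a block with two points \<open>a \<noteq> b\<close>
  (its rank is positive), and the atom merging them lies below \<open>Q\<^sub>0\<close>, hence below every member.\<close>
lemma chain_above_some_atom:
  assumes m: "m \<ge> 2" and T0: "0 \<notin> T" and E: "is_chain m T E"
  obtains a b where "a \<in> {1..m}" "b \<in> {1..m}" "a \<noteq> b" "\<forall>Q\<in>E. refines (atom {1..m} a b) Q"
proof (cases "E = {}")
  case True
  then show thesis using that[of 1 2] m by auto
next
  case False
  have Es: "E \<subseteq> rank_sel m T" and Ecmp: "\<forall>P\<in>E. \<forall>Q\<in>E. refines P Q \<or> refines Q P"
    using E unfolding is_chain_def by auto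
  note Epart = rank_selD[OF subsetD[OF Es] T0]
  have finE: "finite E"
    using finite_subset[OF _ finitely_many_partition_on[of "{1..m}"]] Es
    unfolding rank_sel_def setparts_def by auto
  have "Max (card ` E) \<in> card ` E" using finE False by (intro Max_in) auto
  then obtain Q0 where "Q0 \<in> E" "card Q0 = Max (card ` E)" by auto
  then have Q0: "Q0 \<in> E" "\<And>Q. Q \<in> E \<Longrightarrow> card Q \<le> card Q0" using finE by auto
  obtain B a b where B: "B \<in> Q0" "a \<in> B" "b \<in> B" "a \<noteq> b"
    using partition_on_nonsingleton_block[of "{1..m}" Q0] Epart(1,2)[OF Q0(1)] by auto
  have ab: "a \<in> {1..m}" "b \<in> {1..m}"
    using partition_on_block_subset[OF Epart(1)[OF Q0(1)] B(1)] B(2,3) by auto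
  have r0: "refines (atom {1..m} a b) Q0" using atom_refines[OF Epart(1)[OF Q0(1)] B(1-3)] .
  have "refines (atom {1..m} a b) Q" if Q: "Q \<in> E" for Q
  proof (cases "refines Q0 Q")
    case True
    then show ?thesis using r0 refines_transitive by blast
  next
    case False
    then have "refines Q Q0" using Ecmp Q0(1) Q by blast
    moreover have "card Q0 \<le> card Q"
      using refines_card_le[OF _ Epart(1)[OF Q] Epart(1)[OF Q0(1)]] \<open>refines Q Q0\<close> by simp
    ultimately have "Q0 = Q"
      using refines_card_eq_imp_eq[OF _ Epart(1)[OF Q] Epart(1)[OF Q0(1)]] Q0(2)[OF Q] by simp
    then show ?thesis using r0 by simp
  qed
  then show thesis using that ab B(4) by blast
qed

lemma max_chain_contains_atom:
  assumes m: "m \<ge> 2" and T0: "0 \<notin> T" and T1: "1 \<in> T" and E: "E \<in> max_chains m T"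
  obtains a b where "a \<in> {1..m}" "b \<in> {1..m}" "a \<noteq> b" "atom {1..m} a b \<in> E"
proof -
  have Ec: "is_chain m T E" and Em: "\<And>D. is_chain m T D \<Longrightarrow> E \<subseteq> D \<Longrightarrow> D = E"
    using E unfolding max_chains_def by auto
  obtain a b where ab: "a \<in> {1..m}" "b \<in> {1..m}" "a \<noteq> b"
    and below: "\<forall>Q\<in>E. refines (atom {1..m} a b) Q"
    using chain_above_some_atom[OF m T0 Ec] by blast
  have "atom {1..m} a b \<in> rank_sel m T"
    using partition_on_atom[OF ab(1,2)] card_atom[OF _ ab] T1 m
    unfolding rank_sel_def setparts_def prank_def by auto
  then have "is_chain m T (insert (atom {1..m} a b) E)"
    using Ec below refines_self unfolding is_chain_def by auto
  then have "atom {1..m} a b \<in> E" using Em[OF _ subset_insertI] by blast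
  then show thesis using that ab by blast
qed

section \<open>Orbits\<close>

definition chain_orbit :: "nat set \<Rightarrow> nat set set set \<Rightarrow> nat set set set set" where
  "chain_orbit A C = {act_chain \<sigma> C | \<sigma>. \<sigma> permutes A}"

lemma chain_orbits_eq_card: "chain_orbits {\<sigma>. \<sigma> permutes A} m S = card (chain_orbit A ` max_chains m S)"
  unfolding chain_orbits_def chain_orbit_def by simp

lemma chain_orbit_act_chain:
  assumes s: "\<sigma> permutes A"
  shows "chain_orbit A (act_chain \<sigma> C) = chain_orbit A C"
proof
  show "chain_orbit A (act_chain \<sigma> C) \<subseteq> chain_orbit A C"
  proof
    fix D assume "D \<in> chain_orbit A (act_chain \<sigma> C)"
    then obtain \<tau> where "\<tau> permutes A" "D = act_chain (\<tau> \<circ> \<sigma>) C"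
      unfolding chain_orbit_def act_chain_compose by blast
    then show "D \<in> chain_orbit A C" unfolding chain_orbit_def using permutes_compose[OF s] by blast
  qed
  show "chain_orbit A C \<subseteq> chain_orbit A (act_chain \<sigma> C)"
  proof
    fix D assume "D \<in> chain_orbit A C"
    then obtain \<tau> where "\<tau> permutes A" "D = act_chain (\<tau> \<circ> inv \<sigma>) (act_chain \<sigma> C)"
      unfolding chain_orbit_def act_chain_compose act_chain_inv[OF s] by blast
    then show "D \<in> chain_orbit A (act_chain \<sigma> C)"
      unfolding chain_orbit_def using permutes_compose[OF permutes_inv[OF s]] by blast
  qed
qed

lemma chain_orbit_eq_iff:
  "chain_orbit A C = chain_orbit A D \<longleftrightarrow> (\<exists>\<sigma>. \<sigma> permutes A \<and> act_chain \<sigma> C = D)"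
proof
  assume eq: "chain_orbit A C = chain_orbit A D"
  have "act_chain id D \<in> chain_orbit A D" unfolding chain_orbit_def using permutes_id by blast
  then have "D \<in> chain_orbit A C" unfolding eq act_chain_id .
  then show "\<exists>\<sigma>. \<sigma> permutes A \<and> act_chain \<sigma> C = D" unfolding chain_orbit_def by blast
next
  assume "\<exists>\<sigma>. \<sigma> permutes A \<and> act_chain \<sigma> C = D"
  then show "chain_orbit A C = chain_orbit A D" using chain_orbit_act_chain by metis
qed

lemma card_image_eq_of_same_kernel:
  assumes "\<And>x y. x \<in> X \<Longrightarrow> y \<in> X \<Longrightarrow> f x = f y \<longleftrightarrow> g x = g y"
  shows "card (f ` X) = card (g ` X)"
proof -
  define h where "h z = g (inv_into X f z)" for z
  have hf: "h (f x) = g x" if "x \<in> X" for x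
    using assms[of "inv_into X f (f x)" x] that unfolding h_def
    by (simp add: inv_into_into f_inv_into_f)
  have "h ` f ` X = g ` X" using hf by (auto simp: image_iff)
  moreover have "inj_on h (f ` X)"
  proof (rule inj_onI)
    fix z1 z2 assume "z1 \<in> f ` X" "z2 \<in> f ` X" "h z1 = h z2"
    then obtain x1 x2 where "x1 \<in> X" "x2 \<in> X" "z1 = f x1" "z2 = f x2" "g x1 = g x2"
      using hf by auto
    then show "z1 = z2" using assms by blast
  qed
  ultimately show ?thesis by (metis card_image)
qed

lemma permutes_exists_pair:
  assumes "a \<in> A" "b \<in> A" "c \<in> A" "d \<in> A" "a \<noteq> b" "c \<noteq> d"
  obtains \<sigma> where "\<sigma> permutes A" "\<sigma> a = c" "\<sigma> b = d"
proof -
  define t where "t = transpose a c"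
  have "t permutes A" "t b \<in> A" "t a = c" "t b \<noteq> c"
    unfolding t_def using assms by (auto intro: permutes_swap_id simp: transpose_def)
  then have "transpose (t b) d \<circ> t permutes A" "(transpose (t b) d \<circ> t) a = c"
    "(transpose (t b) d \<circ> t) b = d"
    using assms by (auto intro: permutes_compose permutes_swap_id simp: transpose_def)
  then show thesis by (rule that)
qed

lemma chain_orbit_meets_extend_chain:
  assumes n: "n \<ge> 1" and S0: "0 \<notin> S" and E: "E \<in> max_chains (Suc n) (shift_ranks S)"
  obtains C where "C \<in> max_chains n S"
    and "chain_orbit {1..Suc n} E = chain_orbit {1..Suc n} (extend_chain n C)"
proof -
  obtain a b where ab: "a \<in> {1..Suc n}" "b \<in> {1..Suc n}" "a \<noteq> b" "atom {1..Suc n} a b \<in> E"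
    using max_chain_contains_atom[of "Suc n" "shift_ranks S" E] E S0 n by auto
  obtain \<sigma> where s: "\<sigma> permutes {1..Suc n}" "\<sigma> a = n" "\<sigma> b = Suc n"
    using permutes_exists_pair[OF ab(1,2), of n "Suc n"] ab(3) n by auto
  have "act_part \<sigma> (atom {1..Suc n} a b) = last_atom n"
    unfolding act_part_atom[OF s(1)] s(2,3) last_atom_def ..
  then have "last_atom n \<in> act_chain \<sigma> E" using ab(4) unfolding act_chain_eq by force
  note restr = max_chains_restrict_chain[OF n S0 max_chains_act_chain[OF s(1) E] this]
  show thesis
  proof (rule that)
    show "restrict_chain n (act_chain \<sigma> E) \<in> max_chains n S" by (rule restr(1))
    show "chain_orbit {1..Suc n} E = chain_orbit {1..Suc n} (extend_chain n (restrict_chain n (act_chain \<sigma> E)))"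
      unfolding restr(2) chain_orbit_act_chain[OF s(1)] ..
  qed
qed

lemma stabiliser_last_atom:
  assumes s: "\<sigma> permutes {1..Suc n}" and fix_atom: "act_part \<sigma> (last_atom n) = last_atom n"
  shows "(\<sigma> n = n \<and> \<sigma> (Suc n) = Suc n) \<or> (\<sigma> n = Suc n \<and> \<sigma> (Suc n) = n)"
proof -
  have "atom {1..Suc n} (\<sigma> n) (\<sigma> (Suc n)) = atom {1..Suc n} n (Suc n)"
    using fix_atom unfolding last_atom_def act_part_atom[OF s] .
  moreover have "\<sigma> n \<noteq> \<sigma> (Suc n)" using permutes_inj[OF s] by (metis inj_eq n_not_Suc_n)
  ultimately have "{\<sigma> n, \<sigma> (Suc n)} = {n, Suc n}" by (rule atom_eq_imp_doubleton_eq)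
  then show ?thesis by (auto simp: doubleton_eq_iff)
qed

text \<open>On extended partitions the transposition of \<open>n\<close> and \<open>n + 1\<close> acts trivially, so an element
  of the stabiliser of \<open>last_atom n\<close> may be replaced by one fixing both \<open>n\<close> and \<open>n + 1\<close>.\<close>
lemma stabiliser_last_atom_act_extend_chain:
  assumes n: "n \<ge> 1" and s: "\<sigma> permutes {1..Suc n}"
    and fix_atom: "act_part \<sigma> (last_atom n) = last_atom n"
    and C: "\<And>P. P \<in> C \<Longrightarrow> partition_on {1..n} P"
  obtains \<tau> where "\<tau> permutes {1..n - 1}"
    and "act_chain \<sigma> (extend_chain n C) = extend_chain n (act_chain \<tau> C)"
proof -
  define \<tau> where "\<tau> = (if \<sigma> n = n then \<sigma> else \<sigma> \<circ> transpose n (Suc n))"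
  have cases: "(\<sigma> n = n \<and> \<sigma> (Suc n) = Suc n) \<or> (\<sigma> n = Suc n \<and> \<sigma> (Suc n) = n)"
    by (rule stabiliser_last_atom[OF s fix_atom])
  have t: "\<tau> permutes {1..Suc n}"
    unfolding \<tau>_def using permutes_compose[OF permutes_swap_id s, of n "Suc n"] n s by auto
  have fix_n: "\<tau> n = n" and fix_Suc_n: "\<tau> (Suc n) = Suc n"
    using cases unfolding \<tau>_def by auto
  have "act_part \<tau> (extend_part n P) = act_part \<sigma> (extend_part n P)" if "P \<in> C" for P
    using act_part_transpose_extend_part[OF C[OF that]] unfolding \<tau>_def
    by (simp add: act_part_compose)
  moreover have "act_part \<tau> (last_atom n) = act_part \<sigma> (last_atom n)"
    using fix_atom act_part_atom[OF t] fix_n fix_Suc_n unfolding last_atom_def by simp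
  ultimately have "act_chain \<sigma> (extend_chain n C) = act_chain \<tau> (extend_chain n C)"
    unfolding act_chain_eq extend_chain_def image_insert image_image by (simp cong: image_cong)
  also have "\<dots> = extend_chain n (act_chain \<tau> C)" by (rule act_chain_extend_chain[OF t fix_n fix_Suc_n])
  finally have "act_chain \<sigma> (extend_chain n C) = extend_chain n (act_chain \<tau> C)" .
  moreover have "\<tau> permutes {1..n - 1}"
  proof (rule permutes_superset[OF t])
    fix x assume "x \<in> {1..Suc n} - {1..n - 1}"
    then have "x = n \<or> x = Suc n" using n by auto
    then show "\<tau> x = x" using fix_n fix_Suc_n by auto
  qed
  ultimately show thesis by (rule that[rotated])
qed

lemma chain_orbit_extend_chain_eq_iff:
  assumes n: "n \<ge> 1" and S0: "0 \<notin> S" and C1: "C1 \<in> max_chains n S" and C2: "C2 \<in> max_chains n S"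
  shows "chain_orbit {1..Suc n} (extend_chain n C1) = chain_orbit {1..Suc n} (extend_chain n C2)
    \<longleftrightarrow> chain_orbit {1..n - 1} C1 = chain_orbit {1..n - 1} C2"
proof
  assume "chain_orbit {1..n - 1} C1 = chain_orbit {1..n - 1} C2"
  then obtain \<sigma> where s: "\<sigma> permutes {1..n - 1}" "act_chain \<sigma> C1 = C2"
    using chain_orbit_eq_iff by blast
  have sG: "\<sigma> permutes {1..Suc n}" by (rule permutes_subset[OF s(1)]) auto
  have "\<sigma> n = n" "\<sigma> (Suc n) = Suc n" using permutes_not_in[OF s(1)] n by auto
  then have "act_chain \<sigma> (extend_chain n C1) = extend_chain n C2"
    using act_chain_extend_chain[OF sG] s(2) by simp
  then show "chain_orbit {1..Suc n} (extend_chain n C1) = chain_orbit {1..Suc n} (extend_chain n C2)"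
    using chain_orbit_eq_iff sG by blast
next
  have C1c: "is_chain n S C1" and C2c: "is_chain n S C2"
    using C1 C2 unfolding max_chains_def by auto
  then have C1s: "C1 \<subseteq> rank_sel n S" and C2s: "C2 \<subseteq> rank_sel n S" unfolding is_chain_def by auto
  assume "chain_orbit {1..Suc n} (extend_chain n C1) = chain_orbit {1..Suc n} (extend_chain n C2)"
  then obtain \<sigma> where s: "\<sigma> permutes {1..Suc n}"
    and act: "act_chain \<sigma> (extend_chain n C1) = extend_chain n C2"
    using chain_orbit_eq_iff by blast
  have "last_atom n \<in> act_chain \<sigma> (extend_chain n C1)"
    unfolding act by (simp add: extend_chain_def)
  then obtain Q where Q: "Q \<in> extend_chain n C1" "act_part \<sigma> Q = last_atom n"
    unfolding act_chain_eq by blast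
  have Q_atom: "Q = last_atom n"
  proof (rule ccontr)
    assume "Q \<noteq> last_atom n"
    then obtain P where P: "P \<in> C1" "Q = extend_part n P" using Q(1) unfolding extend_chain_def by auto
    note P_rank = rank_selD[OF subsetD[OF C1s P(1)] S0]
    have "card (last_atom n) = card P"
      unfolding Q(2)[symmetric] card_act_part[OF s] P(2) card_extend_part[OF P_rank(1)] ..
    then show False using card_last_atom[OF n] P_rank(2) by simp
  qed
  obtain \<tau> where t: "\<tau> permutes {1..n - 1}"
    and "act_chain \<sigma> (extend_chain n C1) = extend_chain n (act_chain \<tau> C1)"
  proof (rule stabiliser_last_atom_act_extend_chain[OF n s])
    show "act_part \<sigma> (last_atom n) = last_atom n" using Q(2) Q_atom by simp
    show "partition_on {1..n} P" if "P \<in> C1" for P using rank_selD(1)[OF _ S0] C1s that by blast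
  qed
  then have "extend_chain n (act_chain \<tau> C1) = extend_chain n C2" using act by simp
  moreover have "act_chain \<tau> C1 \<subseteq> rank_sel n S"
    using is_chain_act_chain[OF permutes_subset[OF t] C1c] unfolding is_chain_def by auto
  ultimately have "act_chain \<tau> C1 = C2" using restrict_extend_chain[OF n S0] C2s by metis
  then show "chain_orbit {1..n - 1} C1 = chain_orbit {1..n - 1} C2" using chain_orbit_eq_iff t by blast
qed

theorem mainTheorem2:
  fixes n :: nat and S :: "nat set"
  assumes "n \<ge> 3" and "S \<noteq> {}" and "S \<subseteq> {1..n-2}"
  shows "a_S ({1} \<union> (\<lambda>s. s + 1) ` S) (n + 1) = a'_S S n"
proof -
  have n: "n \<ge> 1" and S0: "0 \<notin> S" using assms(1,3) by auto
  let ?orb = "chain_orbit {1..Suc n}" and ?orb' = "chain_orbit {1..n - 1}"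
  have "?orb ` max_chains (Suc n) (shift_ranks S) = (\<lambda>C. ?orb (extend_chain n C)) ` max_chains n S"
  proof (intro equalityI subsetI)
    fix X assume "X \<in> ?orb ` max_chains (Suc n) (shift_ranks S)"
    then obtain E where "E \<in> max_chains (Suc n) (shift_ranks S)" "X = ?orb E" by blast
    then show "X \<in> (\<lambda>C. ?orb (extend_chain n C)) ` max_chains n S"
      using chain_orbit_meets_extend_chain[OF n S0] by (metis image_eqI)
  qed (use max_chains_extend_chain[OF n S0] in blast)
  also have "card \<dots> = card (?orb' ` max_chains n S)"
    by (rule card_image_eq_of_same_kernel) (rule chain_orbit_extend_chain_eq_iff[OF n S0])
  finally show ?thesis unfolding a_S_def a'_S_def chain_orbits_eq_card by simp
qed

end
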